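(* Let $T$ be a first-order $\mathscr L$-theory and $A$ a model of $T_\forall$. Then $A$ is existentially closed in $\mathcal U_{\mathcal K}=\mathrm{Mod}(T_\forall)$ if and only if $A^*$ is geometrically closed in $\mathcal U_{\mathcal K}^*=\mathrm{Mod}(T_\forall\cup\emptyset^* )$.
   Context: $T_\forall$: consequences of $T$ of the form $\forall\bar y(\bigwedge\Phi\to\bigvee\Psi)$, $\Phi,\Psi$ finite sets of atomic formulas. $A$ is existentially closed in a class $\mathcal C$ if every embedding of $A$ into a member of $\mathcal C$ reflects existential sentences with parameters from $A$. $\mathscr L^*$ is $\mathscr L$ plus, for each relation symbol $R$ of $\mathscr L$, a new relation symbol $R^*$ of the same arity; $\emptyset^*$ is the set of axioms $\forall\bar x(\neg R(\bar x)\leftrightarrow R^*(\bar x))$; $T^*=T\cup\emptyset^*$ (and $T_\forall\cup\emptyset^*$ is equivalent to $(T^* )_\forall$). $A^*$ is the expansion of $A$ interpreting each $R^*$ as the complement of $R$. A homomorphism $f:C\to D$ is geometrically closed if every sentence $\forall\bar y\,(\bigwedge\Phi(\bar c,\bar y)\to\psi(\bar c,\bar y))$ ($\Phi\cup\{\psi\}$ finite sets of atomic formulas, parameters from $C$) true in $C$ holds in $D$ of $f\bar c$; $C$ is geometrically closed in a class if every homomorphism from $C$ to a member of that class is. *)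

theory Defs
  imports Main
begin

text \<open>A language is given by arity functions; every element of the types of
function symbols 'f and relation symbols 'r is a symbol of the language.\<close>

datatype ('f, 'r) lang = Lang (farity: "'f \<Rightarrow> nat") (rarity: "'r \<Rightarrow> nat")

datatype 'f trm = Var nat | Fn 'f "'f trm list"

datatype ('f, 'r) fm =
    Bot
  | Eq "'f trm" "'f trm"
  | Rel 'r "'f trm list"
  | Neg "('f, 'r) fm"
  | Conj "('f, 'r) fm" "('f, 'r) fm"
  | Disj "('f, 'r) fm" "('f, 'r) fm"
  | Imp "('f, 'r) fm" "('f, 'r) fm"
  | Ex nat "('f, 'r) fm"
  | All nat "('f, 'r) fm"

definition Iff :: "('f, 'r) fm \<Rightarrow> ('f, 'r) fm \<Rightarrow> ('f, 'r) fm" where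
  "Iff p q = Conj (Imp p q) (Imp q p)"

definition Top :: "('f, 'r) fm" where
  "Top = Neg Bot"

fun conjs :: "('f, 'r) fm list \<Rightarrow> ('f, 'r) fm" where
  "conjs [] = Top"
| "conjs (p # ps) = Conj p (conjs ps)"

fun disjs :: "('f, 'r) fm list \<Rightarrow> ('f, 'r) fm" where
  "disjs [] = Bot"
| "disjs (p # ps) = Disj p (disjs ps)"

fun fvt :: "'f trm \<Rightarrow> nat set" where
  "fvt (Var n) = {n}"
| "fvt (Fn f ts) = \<Union> (set (map fvt ts))"

fun fv :: "('f, 'r) fm \<Rightarrow> nat set" where
  "fv Bot = {}"
| "fv (Eq s t) = fvt s \<union> fvt t"
| "fv (Rel r ts) = \<Union> (set (map fvt ts))"
| "fv (Neg p) = fv p"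
| "fv (Conj p q) = fv p \<union> fv q"
| "fv (Disj p q) = fv p \<union> fv q"
| "fv (Imp p q) = fv p \<union> fv q"
| "fv (Ex x p) = fv p - {x}"
| "fv (All x p) = fv p - {x}"

fun wf_trm :: "('f, 'r) lang \<Rightarrow> 'f trm \<Rightarrow> bool" where
  "wf_trm L (Var n) = True"
| "wf_trm L (Fn f ts) = (length ts = farity L f \<and> list_all (wf_trm L) ts)"

fun wf_fm :: "('f, 'r) lang \<Rightarrow> ('f, 'r) fm \<Rightarrow> bool" where
  "wf_fm L Bot = True"
| "wf_fm L (Eq s t) = (wf_trm L s \<and> wf_trm L t)"
| "wf_fm L (Rel r ts) = (length ts = rarity L r \<and> list_all (wf_trm L) ts)"
| "wf_fm L (Neg p) = wf_fm L p"
| "wf_fm L (Conj p q) = (wf_fm L p \<and> wf_fm L q)"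
| "wf_fm L (Disj p q) = (wf_fm L p \<and> wf_fm L q)"
| "wf_fm L (Imp p q) = (wf_fm L p \<and> wf_fm L q)"
| "wf_fm L (Ex x p) = wf_fm L p"
| "wf_fm L (All x p) = wf_fm L p"

definition sentence :: "('f, 'r) lang \<Rightarrow> ('f, 'r) fm \<Rightarrow> bool" where
  "sentence L p \<longleftrightarrow> wf_fm L p \<and> fv p = {}"

definition theory_of :: "('f, 'r) lang \<Rightarrow> ('f, 'r) fm set \<Rightarrow> bool" where
  "theory_of L T \<longleftrightarrow> (\<forall>p\<in>T. sentence L p)"

fun atomic :: "('f, 'r) fm \<Rightarrow> bool" where
  "atomic Bot = True"
| "atomic (Eq s t) = True"
| "atomic (Rel r ts) = True"
| "atomic _ = False"

fun qfree :: "('f, 'r) fm \<Rightarrow> bool" where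
  "qfree (Ex x p) = False"
| "qfree (All x p) = False"
| "qfree (Neg p) = qfree p"
| "qfree (Conj p q) = (qfree p \<and> qfree q)"
| "qfree (Disj p q) = (qfree p \<and> qfree q)"
| "qfree (Imp p q) = (qfree p \<and> qfree q)"
| "qfree _ = True"

definition existential :: "('f, 'r) fm \<Rightarrow> bool" where
  "existential p \<longleftrightarrow> (\<exists>ys q. qfree q \<and> p = foldr Ex ys q)"

definition univ_geom_sentences :: "('f, 'r) lang \<Rightarrow> ('f, 'r) fm set" where
  "univ_geom_sentences L =
     {p. sentence L p \<and>
         (\<exists>ys Phi Psi. (\<forall>a\<in>set Phi \<union> set Psi. atomic a) \<and>
                       p = foldr All ys (Imp (conjs Phi) (disjs Psi)))}"

datatype ('a, 'f, 'r) struc =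
  Struc (dom: "'a set") (fint: "'f \<Rightarrow> 'a list \<Rightarrow> 'a") (rint: "'r \<Rightarrow> 'a list \<Rightarrow> bool")

definition is_struc :: "('f, 'r) lang \<Rightarrow> ('a, 'f, 'r) struc \<Rightarrow> bool" where
  "is_struc L M \<longleftrightarrow> dom M \<noteq> {} \<and>
     (\<forall>f xs. length xs = farity L f \<and> set xs \<subseteq> dom M \<longrightarrow> fint M f xs \<in> dom M)"

fun eval :: "('a, 'f, 'r) struc \<Rightarrow> (nat \<Rightarrow> 'a) \<Rightarrow> 'f trm \<Rightarrow> 'a" where
  "eval M e (Var n) = e n"
| "eval M e (Fn f ts) = fint M f (map (eval M e) ts)"

fun sat :: "('a, 'f, 'r) struc \<Rightarrow> (nat \<Rightarrow> 'a) \<Rightarrow> ('f, 'r) fm \<Rightarrow> bool" where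
  "sat M e Bot = False"
| "sat M e (Eq s t) = (eval M e s = eval M e t)"
| "sat M e (Rel r ts) = rint M r (map (eval M e) ts)"
| "sat M e (Neg p) = (\<not> sat M e p)"
| "sat M e (Conj p q) = (sat M e p \<and> sat M e q)"
| "sat M e (Disj p q) = (sat M e p \<or> sat M e q)"
| "sat M e (Imp p q) = (sat M e p \<longrightarrow> sat M e q)"
| "sat M e (Ex x p) = (\<exists>a\<in>dom M. sat M (e(x := a)) p)"
| "sat M e (All x p) = (\<forall>a\<in>dom M. sat M (e(x := a)) p)"

definition assignment :: "('a, 'f, 'r) struc \<Rightarrow> (nat \<Rightarrow> 'a) \<Rightarrow> bool" where
  "assignment M e \<longleftrightarrow> (\<forall>n. e n \<in> dom M)"

definition models :: "('f, 'r) lang \<Rightarrow> ('a, 'f, 'r) struc \<Rightarrow> ('f, 'r) fm set \<Rightarrow> bool" where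
  "models L M T \<longleftrightarrow> is_struc L M \<and> (\<forall>p\<in>T. \<forall>e. assignment M e \<longrightarrow> sat M e p)"

text \<open>The class \<open>Mod(T)\<close> of models whose carriers live in the type 'a.\<close>
definition Mod :: "('f, 'r) lang \<Rightarrow> ('f, 'r) fm set \<Rightarrow> ('a, 'f, 'r) struc set" where
  "Mod L T = {M. models L M T}"

text \<open>By the downward Loewenheim-Skolem theorem it
suffices to test structures of cardinality at most \<open>|L| + \<aleph>\<^sub>0\<close>; every such
structure is isomorphic to one whose carrier lies in the type below, so this is
exactly \<open>T \<Turnstile> p\<close>.\<close>
type_synonym ('f, 'r) canon = "('f + 'r + nat) list"

definition entails :: "('f, 'r) lang \<Rightarrow> ('f, 'r) fm set \<Rightarrow> ('f, 'r) fm \<Rightarrow> bool" where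
  "entails L T p \<longleftrightarrow>
     (\<forall>M :: (('f, 'r) canon, 'f, 'r) struc. models L M T \<longrightarrow> models L M {p})"

definition Tforall :: "('f, 'r) lang \<Rightarrow> ('f, 'r) fm set \<Rightarrow> ('f, 'r) fm set" where
  "Tforall L T = {p \<in> univ_geom_sentences L. entails L T p}"

definition embedding ::
  "('f, 'r) lang \<Rightarrow> ('a \<Rightarrow> 'b) \<Rightarrow> ('a, 'f, 'r) struc \<Rightarrow> ('b, 'f, 'r) struc \<Rightarrow> bool" where
  "embedding L h A B \<longleftrightarrow>
     h ` dom A \<subseteq> dom B \<and> inj_on h (dom A) \<and>
     (\<forall>f xs. length xs = farity L f \<and> set xs \<subseteq> dom A \<longrightarrow>
            h (fint A f xs) = fint B f (map h xs)) \<and>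
     (\<forall>r xs. length xs = rarity L r \<and> set xs \<subseteq> dom A \<longrightarrow>
            (rint B r (map h xs) \<longleftrightarrow> rint A r xs))"

definition homomorphism ::
  "('f, 'r) lang \<Rightarrow> ('a \<Rightarrow> 'b) \<Rightarrow> ('a, 'f, 'r) struc \<Rightarrow> ('b, 'f, 'r) struc \<Rightarrow> bool" where
  "homomorphism L h A B \<longleftrightarrow>
     h ` dom A \<subseteq> dom B \<and>
     (\<forall>f xs. length xs = farity L f \<and> set xs \<subseteq> dom A \<longrightarrow>
            h (fint A f xs) = fint B f (map h xs)) \<and>
     (\<forall>r xs. length xs = rarity L r \<and> set xs \<subseteq> dom A \<longrightarrow>
            rint A r xs \<longrightarrow> rint B r (map h xs))"

definition ec_in :: "('f, 'r) lang \<Rightarrow> ('a, 'f, 'r) struc \<Rightarrow> ('b, 'f, 'r) struc set \<Rightarrow> bool" where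
  "ec_in L A K \<longleftrightarrow>
     (\<forall>B\<in>K. \<forall>h. embedding L h A B \<longrightarrow>
        (\<forall>p e. wf_fm L p \<and> existential p \<and> assignment A e \<longrightarrow>
               sat B (h \<circ> e) p \<longrightarrow> sat A e p))"

definition geom_closed_hom ::
  "('f, 'r) lang \<Rightarrow> ('a \<Rightarrow> 'b) \<Rightarrow> ('a, 'f, 'r) struc \<Rightarrow> ('b, 'f, 'r) struc \<Rightarrow> bool" where
  "geom_closed_hom L h C D \<longleftrightarrow>
     homomorphism L h C D \<and>
     (\<forall>ys Phi psi e. (\<forall>a\<in>set (psi # Phi). atomic a \<and> wf_fm L a) \<and> assignment C e \<longrightarrow>
        sat C e (foldr All ys (Imp (conjs Phi) psi)) \<longrightarrow>
        sat D (h \<circ> e) (foldr All ys (Imp (conjs Phi) psi)))"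

definition gc_in :: "('f, 'r) lang \<Rightarrow> ('a, 'f, 'r) struc \<Rightarrow> ('b, 'f, 'r) struc set \<Rightarrow> bool" where
  "gc_in L C K \<longleftrightarrow>
     (\<forall>D\<in>K. \<forall>h. homomorphism L h C D \<longrightarrow> geom_closed_hom L h C D)"

text \<open>Relation symbols of \<open>L\<^sup>*\<close>: the original ones, a complement \<open>R\<^sup>*\<close> for
each relation symbol R, and a complement symbol for equality (equality being
regarded as a relation symbol of L, whose star is \<open>\<noteq>\<close>).\<close>
datatype 'r srel = Base 'r | Co 'r | NotEq

fun srarity :: "('r \<Rightarrow> nat) \<Rightarrow> 'r srel \<Rightarrow> nat" where
  "srarity ar (Base r) = ar r"
| "srarity ar (Co r) = ar r"
| "srarity ar NotEq = 2"

definition Lstar :: "('f, 'r) lang \<Rightarrow> ('f, 'r srel) lang" where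
  "Lstar L = Lang (farity L) (srarity (rarity L))"

definition star :: "('a, 'f, 'r) struc \<Rightarrow> ('a, 'f, 'r srel) struc" where
  "star A = Struc (dom A) (fint A)
     (\<lambda>s xs. case s of
        Base r \<Rightarrow> rint A r xs
      | Co r \<Rightarrow> \<not> rint A r xs
      | NotEq \<Rightarrow> (case xs of [a, b] \<Rightarrow> a \<noteq> b | _ \<Rightarrow> False))"

definition lift_fm :: "('f, 'r) fm \<Rightarrow> ('f, 'r srel) fm" where
  "lift_fm p = map_fm id Base p"

definition empty_star :: "('f, 'r) lang \<Rightarrow> ('f, 'r srel) fm set" where
  "empty_star L =
     {foldr All [0..<rarity L r]
        (Iff (Neg (Rel (Base r) (map Var [0..<rarity L r])))
             (Rel (Co r) (map Var [0..<rarity L r]))) | r. True}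
   \<union> {All 0 (All 1 (Iff (Neg (Eq (Var 0) (Var 1))) (Rel NotEq [Var 0, Var 1])))}"

end

theory Submission
  imports Defs
begin

text \<open>An \<open>L\<^sup>*\<close>-homomorphism from \<open>A\<^sup>*\<close> into a model D of \<open>\<emptyset>\<^sup>*\<close> is the same thing as an
L-embedding of A into the L-reduct of D: preserving \<open>R\<^sup>*\<close> forces reflecting R, and
preserving \<open>\<noteq>\<close> forces injectivity. Over \<open>\<emptyset>\<^sup>*\<close> every \<open>L\<^sup>*\<close>-atom is equivalent to an
L-literal and every L-literal to an \<open>L\<^sup>*\<close>-atom. Hence a geometric sentence
\<open>\<forall>ys (\<And>\<Phi> \<rightarrow> \<psi>)\<close> failing in D is an existential L-formula \<open>\<exists>ys (\<And>\<Phi>' \<and> \<not>\<psi>')\<close> holding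
in the reduct; conversely, if \<open>\<exists>ys q\<close> fails in A then, for every disjunct of the
disjunctive normal form of q, the sentence \<open>\<forall>ys (\<And>(its literals)\<^sup>* \<rightarrow> \<bottom>)\<close> holds in \<open>A\<^sup>*\<close>.\<close>

definition variant :: "'a set \<Rightarrow> nat list \<Rightarrow> (nat \<Rightarrow> 'a) \<Rightarrow> (nat \<Rightarrow> 'a) \<Rightarrow> bool" where
  "variant X ys e e' \<longleftrightarrow> (\<forall>v. v \<notin> set ys \<longrightarrow> e' v = e v) \<and> (\<forall>v\<in>set ys. e' v \<in> X)"

lemma variant_Nil: "variant X [] e e' \<longleftrightarrow> e' = e"
  by (auto simp: variant_def)

lemma variant_Cons: "variant X (y # ys) e e' \<longleftrightarrow> (\<exists>a\<in>X. variant X ys (e(y := a)) e')"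
  unfolding variant_def by (auto intro!: bexI[of _ "e' y"])

lemma assignment_variant: "assignment M e \<Longrightarrow> variant (dom M) ys e e' \<Longrightarrow> assignment M e'"
  unfolding assignment_def variant_def by metis

lemma sat_foldr_All:
  "sat M e (foldr All ys p) \<longleftrightarrow> (\<forall>e'. variant (dom M) ys e e' \<longrightarrow> sat M e' p)"
  by (induction ys arbitrary: e) (auto simp: variant_Nil variant_Cons)

lemma sat_foldr_Ex:
  "sat M e (foldr Ex ys p) \<longleftrightarrow> (\<exists>e'. variant (dom M) ys e e' \<and> sat M e' p)"
  by (induction ys arbitrary: e) (auto simp: variant_Nil variant_Cons)

lemma wf_fm_foldr_Ex [simp]: "wf_fm L (foldr Ex ys p) \<longleftrightarrow> wf_fm L p"
  by (induction ys) auto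

lemma existential_foldr_Ex: "qfree q \<Longrightarrow> existential (foldr Ex ys q)"
  by (auto simp: existential_def)

lemma sat_conjs: "sat M e (conjs ps) \<longleftrightarrow> (\<forall>p\<in>set ps. sat M e p)"
  by (induction ps) (auto simp: Top_def)

lemma qfree_conjs: "\<forall>p\<in>set ps. qfree p \<Longrightarrow> qfree (conjs ps)"
  by (induction ps) (auto simp: Top_def)

lemma wf_fm_conjs: "\<forall>p\<in>set ps. wf_fm L p \<Longrightarrow> wf_fm L (conjs ps)"
  by (induction ps) (auto simp: Top_def)

lemma eval_in_dom:
  "is_struc L M \<Longrightarrow> assignment M e \<Longrightarrow> wf_trm L t \<Longrightarrow> eval M e t \<in> dom M"
proof (induction t)
  case (Fn f ts)
  then have "set (map (eval M e) ts) \<subseteq> dom M"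
    by (auto simp: list_all_iff)
  with Fn.prems show ?case
    by (auto simp: is_struc_def)
qed (simp add: assignment_def)

lemma models_Un: "models L M (S \<union> S') \<longleftrightarrow> models L M S \<and> models L M S'"
  by (auto simp: models_def)

text \<open>A literal \<open>(b, a)\<close> asserts that the atom a has truth value b; \<open>dnf b p\<close> is a
disjunction of conjunctions of literals equivalent to \<open>p = b\<close>.\<close>

definition dnf_conj :: "'a list list \<Rightarrow> 'a list list \<Rightarrow> 'a list list" where
  "dnf_conj cs ds = [c @ d. c \<leftarrow> cs, d \<leftarrow> ds]"

fun dnf :: "bool \<Rightarrow> ('f, 'r) fm \<Rightarrow> (bool \<times> ('f, 'r) fm) list list" where
  "dnf b Bot = [[(b, Bot)]]"
| "dnf b (Eq s t) = [[(b, Eq s t)]]"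
| "dnf b (Rel r ts) = [[(b, Rel r ts)]]"
| "dnf b (Neg p) = dnf (\<not> b) p"
| "dnf b (Conj p q) = (if b then dnf_conj (dnf True p) (dnf True q) else dnf False p @ dnf False q)"
| "dnf b (Disj p q) = (if b then dnf True p @ dnf True q else dnf_conj (dnf False p) (dnf False q))"
| "dnf b (Imp p q) = (if b then dnf False p @ dnf True q else dnf_conj (dnf True p) (dnf False q))"
| "dnf b (Ex x p) = []"
| "dnf b (All x p) = []"

definition sat_lits :: "('a, 'f, 'r) struc \<Rightarrow> (nat \<Rightarrow> 'a) \<Rightarrow> (bool \<times> ('f, 'r) fm) list \<Rightarrow> bool" where
  "sat_lits M e c \<longleftrightarrow> (\<forall>(b, a)\<in>set c. sat M e a = b)"

lemma sat_lits_single: "sat_lits M e [(b, a)] \<longleftrightarrow> sat M e a = b"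
  by (simp add: sat_lits_def)

lemma sat_lits_append: "sat_lits M e (c @ d) \<longleftrightarrow> sat_lits M e c \<and> sat_lits M e d"
  by (auto simp: sat_lits_def)

lemma bex_sat_lits_dnf_conj:
  "(\<exists>c\<in>set (dnf_conj cs ds). sat_lits M e c) \<longleftrightarrow>
   (\<exists>c\<in>set cs. sat_lits M e c) \<and> (\<exists>d\<in>set ds. sat_lits M e d)"
  by (auto simp: dnf_conj_def sat_lits_append)

lemma bex_sat_lits_dnf:
  "qfree p \<Longrightarrow> (\<exists>c\<in>set (dnf b p). sat_lits M e c) \<longleftrightarrow> sat M e p = b"
  by (induction p arbitrary: b) (auto simp: bex_sat_lits_dnf_conj bex_Un sat_lits_single)

lemma atomic_dnf:
  "wf_fm L p \<Longrightarrow> c \<in> set (dnf b p) \<Longrightarrow> (b', a) \<in> set c \<Longrightarrow> atomic a \<and> wf_fm L a"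
  by (induction b p arbitrary: c rule: dnf.induct) (auto simp: dnf_conj_def split: if_splits)

lemma dom_star [simp]: "dom (star M) = dom M"
  and fint_star [simp]: "fint (star M) = fint M"
  and rint_star_Base [simp]: "rint (star M) (Base r) xs \<longleftrightarrow> rint M r xs"
  and rint_star_Co [simp]: "rint (star M) (Co r) xs \<longleftrightarrow> \<not> rint M r xs"
  and rint_star_NotEq [simp]:
    "rint (star M) NotEq xs \<longleftrightarrow> (case xs of [a, b] \<Rightarrow> a \<noteq> b | _ \<Rightarrow> False)"
  by (simp_all add: star_def)

lemma eval_star [simp]: "eval (star M) = eval M"
proof (intro ext)
  fix e t
  show "eval (star M) e t = eval M e t"
    by (induction t) (auto cong: map_cong)
qed

definition reduct :: "('a, 'f, 'r srel) struc \<Rightarrow> ('a, 'f, 'r) struc" where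
  "reduct D = Struc (dom D) (fint D) (\<lambda>r. rint D (Base r))"

lemma dom_reduct [simp]: "dom (reduct D) = dom D"
  and rint_reduct [simp]: "rint (reduct D) r xs \<longleftrightarrow> rint D (Base r) xs"
  by (simp_all add: reduct_def)

lemma eval_reduct [simp]: "eval (reduct D) = eval D"
proof (intro ext)
  fix e t
  show "eval (reduct D) e t = eval D e t"
    by (induction t) (auto simp: reduct_def cong: map_cong)
qed

lemma reduct_star [simp]: "reduct (star M) = M"
  by (cases M) (simp add: reduct_def star_def)

lemma farity_Lstar [simp]: "farity (Lstar L) = farity L"
  and rarity_Lstar [simp]: "rarity (Lstar L) = srarity (rarity L)"
  by (simp_all add: Lstar_def)

lemma wf_trm_Lstar [simp]: "wf_trm (Lstar L) = wf_trm L"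
proof
  fix t
  show "wf_trm (Lstar L) t = wf_trm L t"
    by (induction t) (auto simp: list_all_iff)
qed

lemma is_struc_reduct [simp]: "is_struc L (reduct D) \<longleftrightarrow> is_struc (Lstar L) D"
  by (simp add: is_struc_def reduct_def)

lemma sat_lift_fm: "sat D e (lift_fm p) \<longleftrightarrow> sat (reduct D) e p"
  by (induction p arbitrary: e) (auto simp: lift_fm_def trm.map_id0)

lemma models_lift_fm: "models (Lstar L) D (lift_fm ` S) \<longleftrightarrow> models L (reduct D) S"
  by (simp add: models_def assignment_def sat_lift_fm)

lemma models_star_empty_star:
  assumes "is_struc L M"
  shows "models (Lstar L) (star M) (empty_star L)"
proof -
  have "is_struc (Lstar L) (star M)"
    using is_struc_reduct[of L "star M"] assms by simp
  then show ?thesis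
    by (auto simp: models_def empty_star_def sat_foldr_All Iff_def)
qed

lemma models_star:
  assumes "models L M S"
  shows "models (Lstar L) (star M) (lift_fm ` S \<union> empty_star L)"
proof -
  have "is_struc L M"
    using assms by (simp add: models_def)
  with assms show ?thesis
    by (simp add: models_Un models_lift_fm models_star_empty_star)
qed

lemma models_empty_star_Co:
  assumes D: "models (Lstar L) D (empty_star L)"
    and xs: "length xs = rarity L r" "set xs \<subseteq> dom D"
  shows "rint D (Co r) xs \<longleftrightarrow> \<not> rint D (Base r) xs"
proof -
  obtain d where d: "d \<in> dom D"
    using D by (auto simp: models_def is_struc_def)
  define e where "e n = (if n < length xs then xs ! n else d)" for n
  have e: "assignment D e"
    using d xs(2) by (auto simp: e_def assignment_def)
  let ?vs = "map Var [0..<rarity L r]"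
  have "foldr All [0..<rarity L r] (Iff (Neg (Rel (Base r) ?vs)) (Rel (Co r) ?vs)) \<in> empty_star L"
    by (auto simp: empty_star_def)
  then have "sat D e (foldr All [0..<rarity L r] (Iff (Neg (Rel (Base r) ?vs)) (Rel (Co r) ?vs)))"
    using D e by (auto simp: models_def)
  then have "sat D e (Iff (Neg (Rel (Base r) ?vs)) (Rel (Co r) ?vs))"
    using e by (auto simp: sat_foldr_All variant_def assignment_def)
  moreover have "map e [0..<rarity L r] = xs"
    using xs(1) by (auto simp: e_def intro: nth_equalityI)
  ultimately show ?thesis
    by (auto simp: Iff_def comp_def)
qed

lemma models_empty_star_NotEq:
  assumes D: "models (Lstar L) D (empty_star L)"
    and "a \<in> dom D" "b \<in> dom D"
  shows "rint D NotEq [a, b] \<longleftrightarrow> a \<noteq> b"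
proof -
  let ?ax = "All 0 (All 1 (Iff (Neg (Eq (Var 0) (Var 1))) (Rel NotEq [Var 0, Var 1])))"
  have "assignment D (\<lambda>_. a)"
    using assms(2) by (simp add: assignment_def)
  moreover have "?ax \<in> empty_star L"
    by (simp add: empty_star_def)
  ultimately have "sat D (\<lambda>_. a) ?ax"
    using D unfolding models_def by blast
  then have "\<forall>x\<in>dom D. \<forall>y\<in>dom D.
      sat D ((\<lambda>_. a)(0 := x, 1 := y)) (Iff (Neg (Eq (Var 0) (Var 1))) (Rel NotEq [Var 0, Var 1]))"
    by simp
  then have "sat D ((\<lambda>_. a)(0 := a, 1 := b)) (Iff (Neg (Eq (Var 0) (Var 1))) (Rel NotEq [Var 0, Var 1]))"
    using assms(2,3) by blast
  then show ?thesis
    by (auto simp: Iff_def)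
qed

lemma embedding_reduct_if_homomorphism_star:
  assumes D: "models (Lstar L) D (empty_star L)"
    and h: "homomorphism (Lstar L) h (star A) D"
  shows "embedding L h A (reduct D)"
proof -
  have hdom: "h ` dom A \<subseteq> dom D"
    using h by (simp add: homomorphism_def)
  have hrel: "rint D s (map h xs)" if "length xs = srarity (rarity L) s" "set xs \<subseteq> dom A"
    "rint (star A) s xs" for s xs
    using h that by (simp add: homomorphism_def)
  have "inj_on h (dom A)"
  proof (rule inj_onI, rule ccontr)
    fix a b
    assume "a \<in> dom A" "b \<in> dom A" "h a = h b" "a \<noteq> b"
    then show False
      using hrel[of "[a, b]" NotEq] models_empty_star_NotEq[OF D] hdom by auto
  qed
  moreover have "rint D (Base r) (map h xs) \<longleftrightarrow> rint A r xs"
    if xs: "length xs = rarity L r" "set xs \<subseteq> dom A" for r xs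
    using hrel[of xs "Base r"] hrel[of xs "Co r"] models_empty_star_Co[OF D, of "map h xs" r]
      xs hdom by auto
  ultimately show ?thesis
    using h hdom by (auto simp: embedding_def homomorphism_def reduct_def)
qed

lemma homomorphism_star_if_embedding:
  assumes h: "embedding L h A B"
  shows "homomorphism (Lstar L) h (star A) (star B)"
  unfolding homomorphism_def
proof (intro conjI allI impI)
  fix s xs
  assume xs: "length xs = rarity (Lstar L) s \<and> set xs \<subseteq> dom (star A)"
    and "rint (star A) s xs"
  then show "rint (star B) s (map h xs)"
  proof (cases s)
    case NotEq
    then obtain a b where "xs = [a, b]"
      using xs by (auto simp: numeral_2_eq_2 length_Suc_conv)
    with xs \<open>rint (star A) s xs\<close> NotEq h show ?thesis
      by (auto simp: embedding_def inj_on_def)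
  qed (use h in \<open>auto simp: embedding_def\<close>)
qed (use h in \<open>auto simp: embedding_def\<close>)

fun unstar :: "('f, 'r srel) fm \<Rightarrow> ('f, 'r) fm" where
  "unstar (Eq s t) = Eq s t"
| "unstar (Rel (Base r) ts) = Rel r ts"
| "unstar (Rel (Co r) ts) = Neg (Rel r ts)"
| "unstar (Rel NotEq [s, t]) = Neg (Eq s t)"
| "unstar _ = Bot"

lemma qfree_unstar: "qfree (unstar a)"
  by (induction a rule: unstar.induct) auto

lemma wf_fm_unstar: "wf_fm (Lstar L) a \<Longrightarrow> wf_fm L (unstar a)"
  by (induction a rule: unstar.induct) auto

lemma sat_star_unstar: "atomic a \<Longrightarrow> sat (star M) e a \<longleftrightarrow> sat M e (unstar a)"
  by (induction a rule: unstar.induct) auto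

lemma sat_unstar:
  assumes D: "models (Lstar L) D (empty_star L)" and e: "assignment D e"
    and a: "atomic a" "wf_fm (Lstar L) a"
  shows "sat D e a \<longleftrightarrow> sat (reduct D) e (unstar a)"
  using a
proof (induction a rule: unstar.induct)
  case (3 r ts)
  have "set (map (eval D e) ts) \<subseteq> dom D"
    using 3 eval_in_dom[of "Lstar L" D e] D e by (auto simp: models_def list_all_iff)
  with 3 show ?case
    using models_empty_star_Co[OF D] by simp
next
  case (4 s t)
  have "eval D e s \<in> dom D" "eval D e t \<in> dom D"
    using 4 eval_in_dom[of "Lstar L" D e] D e by (auto simp: models_def)
  then show ?case
    using models_empty_star_NotEq[OF D] by simp
qed (auto simp: numeral_2_eq_2 length_Suc_conv)

text \<open>The literal \<open>\<not>\<bottom>\<close> has no counterpart among the new relation symbols; it is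
rendered by the true atom \<open>x\<^sub>0 = x\<^sub>0\<close>.\<close>

fun star_lit :: "bool \<Rightarrow> ('f, 'r) fm \<Rightarrow> ('f, 'r srel) fm" where
  "star_lit b Bot = (if b then Bot else Eq (Var 0) (Var 0))"
| "star_lit b (Eq s t) = (if b then Eq s t else Rel NotEq [s, t])"
| "star_lit b (Rel r ts) = Rel (if b then Base r else Co r) ts"
| "star_lit b _ = Bot"

lemma sat_star_lit: "atomic a \<Longrightarrow> sat (star M) e (star_lit b a) \<longleftrightarrow> sat M e a = b"
  by (cases a) auto

lemma atomic_star_lit:
  "atomic a \<Longrightarrow> wf_fm L a \<Longrightarrow> atomic (star_lit b a) \<and> wf_fm (Lstar L) (star_lit b a)"
  by (cases a) auto

lemma sat_conjs_star_lit:
  "\<forall>(b, a)\<in>set c. atomic a \<Longrightarrow>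
   sat (star M) e (conjs (map (case_prod star_lit) c)) \<longleftrightarrow> sat_lits M e c"
  by (induction c) (auto simp: sat_lits_def sat_star_lit Top_def)

lemma ec_inD:
  "ec_in L A K \<Longrightarrow> B \<in> K \<Longrightarrow> embedding L h A B \<Longrightarrow>
   wf_fm L p \<and> existential p \<and> assignment A e \<Longrightarrow> sat B (h \<circ> e) p \<Longrightarrow> sat A e p"
  unfolding ec_in_def by blast

lemma geom_closed_homD:
  "geom_closed_hom L h C D \<Longrightarrow> \<forall>a\<in>set (psi # Phi). atomic a \<and> wf_fm L a \<Longrightarrow>
   assignment C e \<Longrightarrow> sat C e (foldr All ys (Imp (conjs Phi) psi)) \<Longrightarrow>
   sat D (h \<circ> e) (foldr All ys (Imp (conjs Phi) psi))"
  unfolding geom_closed_hom_def by blast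

lemma ec_in_imp_gc_in_star:
  assumes ec: "ec_in L A (Mod L S :: ('b, 'f, 'r) struc set)"
  shows "gc_in (Lstar L) (star A)
           (Mod (Lstar L) (lift_fm ` S \<union> empty_star L) :: ('b, 'f, 'r srel) struc set)"
  unfolding gc_in_def geom_closed_hom_def
proof (intro ballI allI impI conjI)
  fix D :: "('b, 'f, 'r srel) struc" and h ys Phi psi e
  assume "D \<in> Mod (Lstar L) (lift_fm ` S \<union> empty_star L)"
  then have DS: "reduct D \<in> Mod L S" and D: "models (Lstar L) D (empty_star L)"
    by (simp_all add: Mod_def models_Un models_lift_fm)
  assume h: "homomorphism (Lstar L) h (star A) D"
  then have emb: "embedding L h A (reduct D)"
    using embedding_reduct_if_homomorphism_star[OF D] by blast
  assume atoms: "(\<forall>a\<in>set (psi # Phi). atomic a \<and> wf_fm (Lstar L) a) \<and> assignment (star A) e"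
    and sat_A: "sat (star A) e (foldr All ys (Imp (conjs Phi) psi))"
  then have e: "assignment A e"
    by (simp add: assignment_def)
  have he: "assignment D (h \<circ> e)"
    using e h by (auto simp: assignment_def homomorphism_def)
  show "sat D (h \<circ> e) (foldr All ys (Imp (conjs Phi) psi))"
  proof (rule ccontr)
    assume "\<not> ?thesis"
    then obtain e'' where e'': "variant (dom D) ys (h \<circ> e) e''"
      and counter: "\<not> sat D e'' (Imp (conjs Phi) psi)"
      by (auto simp: sat_foldr_All)
    define q where "q = Conj (conjs (map unstar Phi)) (Neg (unstar psi))"
    have q: "qfree q" "wf_fm L q"
      using atoms by (simp_all add: q_def qfree_unstar qfree_conjs wf_fm_unstar wf_fm_conjs)
    have "sat (reduct D) e'' q"
      using counter atoms sat_unstar[OF D assignment_variant[OF he e'']]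
      by (auto simp: q_def sat_conjs)
    then have "sat (reduct D) (h \<circ> e) (foldr Ex ys q)"
      using e'' by (auto simp: sat_foldr_Ex)
    moreover have "wf_fm L (foldr Ex ys q) \<and> existential (foldr Ex ys q) \<and> assignment A e"
      using q e existential_foldr_Ex by simp
    ultimately have "sat A e (foldr Ex ys q)"
      using ec_inD[OF ec DS emb] by blast
    then obtain e' where e': "variant (dom A) ys e e'" and "sat A e' q"
      by (auto simp: sat_foldr_Ex)
    moreover have "sat (star A) e' (Imp (conjs Phi) psi)"
      using sat_A e' by (simp add: sat_foldr_All)
    moreover have "\<forall>a\<in>set (psi # Phi). sat (star A) e' a \<longleftrightarrow> sat A e' (unstar a)"
      using atoms sat_star_unstar by blast
    ultimately show False
      by (auto simp: q_def sat_conjs)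
  qed
qed

lemma gc_in_star_imp_ec_in:
  assumes gc: "gc_in (Lstar L) (star A)
           (Mod (Lstar L) (lift_fm ` S \<union> empty_star L) :: ('b, 'f, 'r srel) struc set)"
  shows "ec_in L A (Mod L S :: ('b, 'f, 'r) struc set)"
  unfolding ec_in_def
proof (intro ballI allI impI)
  fix B :: "('b, 'f, 'r) struc" and h p e
  assume "B \<in> Mod L S" and emb: "embedding L h A B"
  then have "star B \<in> Mod (Lstar L) (lift_fm ` S \<union> empty_star L)"
    by (simp add: Mod_def models_star)
  then have gch: "geom_closed_hom (Lstar L) h (star A) (star B)"
    using gc homomorphism_star_if_embedding[OF emb] by (simp add: gc_in_def)
  assume "wf_fm L p \<and> existential p \<and> assignment A e"
  then obtain ys q where q: "qfree q" "wf_fm L q" and p: "p = foldr Ex ys q"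
    and e: "assignment (star A) e"
    by (auto simp: existential_def assignment_def)
  assume "sat B (h \<circ> e) p"
  then obtain e'' where e'': "variant (dom B) ys (h \<circ> e) e''" and "sat B e'' q"
    by (auto simp: p sat_foldr_Ex)
  then obtain c where c: "c \<in> set (dnf True q)" and sat_c: "sat_lits B e'' c"
    using bex_sat_lits_dnf[OF q(1)] by blast
  have atoms: "\<forall>(b, a)\<in>set c. atomic a \<and> wf_fm L a"
    using atomic_dnf[OF q(2) c] by blast
  then have "\<forall>(b, a)\<in>set c. atomic a"
    by auto
  note sat_Phi = sat_conjs_star_lit[OF this]
  let ?Phi = "map (case_prod star_lit) c"
  show "sat A e p"
  proof (rule ccontr)
    assume "\<not> ?thesis"
    then have "\<not> sat_lits A e' c" if "variant (dom A) ys e e'" for e'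
      using that c bex_sat_lits_dnf[OF q(1), of True A e'] by (auto simp: p sat_foldr_Ex)
    then have "sat (star A) e (foldr All ys (Imp (conjs ?Phi) Bot))"
      by (auto simp: sat_foldr_All sat_Phi)
    moreover have "atomic (star_lit b a) \<and> wf_fm (Lstar L) (star_lit b a)" if "(b, a) \<in> set c" for b a
      using atoms that atomic_star_lit by blast
    then have "\<forall>a\<in>set (Bot # ?Phi). atomic a \<and> wf_fm (Lstar L) a"
      by auto
    ultimately have "sat (star B) (h \<circ> e) (foldr All ys (Imp (conjs ?Phi) Bot))"
      using geom_closed_homD[OF gch] e by blast
    then show False
      using e'' sat_c by (auto simp: sat_foldr_All sat_Phi)
  qed
qed

theorem theorem4p21:
  fixes L :: "('f, 'r) lang"
    and T :: "('f, 'r) fm set"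
    and A :: "('a, 'f, 'r) struc"
  assumes "theory_of L T"
    and "models L A (Tforall L T)"
  shows "ec_in L A (Mod L (Tforall L T) :: ('b, 'f, 'r) struc set) \<longleftrightarrow>
         gc_in (Lstar L) (star A)
           (Mod (Lstar L) (lift_fm ` Tforall L T \<union> empty_star L) :: ('b, 'f, 'r srel) struc set)"
  using ec_in_imp_gc_in_star gc_in_star_imp_ec_in by blast

end
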